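(* Let $n\ge1$. For every homogeneous polynomial $w\in\mathbb{Z}\langle\mathbf{a},\mathbf{b}\rangle$ of degree $n-1$, $$\Theta(w)=(1-q)^n\cdot[n]!\cdot \mathrm{ps}^*(\gamma(w)).$$ Consequently, for every graded poset $P$ of rank $n$, $$\Theta(\Psi(P))=(1-q)^n\cdot[n]!\cdot\mathrm{ps}^*(F(P)).$$
   Context: $\mathbf{a},\mathbf{b}$ are non-commuting variables. The Major MacMahon map $\Theta:\mathbb{Z}\langle\mathbf{a},\mathbf{b}\rangle\to\mathbb{Z}[q]$ is linear with $\Theta(u_1\cdots u_m)=\prod_{i:\,u_i=\mathbf{b}}q^i$ on monomials. $[m]=1+q+\cdots+q^{m-1}$, $[m]!=[m]\cdots[1]$. $\mathrm{QSym}$ is the algebra of quasi-symmetric functions in variables $t_1,t_2,\dots$, with monomial basis $M_\alpha=\sum_{i_1<\cdots<i_k}t_{i_1}^{\alpha_1}\cdots t_{i_k}^{\alpha_k}$ for compositions $\alpha=(\alpha_1,\dots,\alpha_k)$. For a composition $\alpha$ of $n$, let $v_\alpha=(\mathbf{a}-\mathbf{b})^{\alpha_1-1}\mathbf{b}(\mathbf{a}-\mathbf{b})^{\alpha_2-1}\mathbf{b}\cdots\mathbf{b}(\mathbf{a}-\mathbf{b})^{\alpha_k-1}$ (degree $n-1$); $\gamma:\mathbb{Z}\langle\mathbf{a},\mathbf{b}\rangle\to\mathrm{QSym}$ is the linear map with $\gamma(v_\alpha)=M_\alpha$. The stable principal specialization is $\mathrm{ps}(f)=f(1,q,q^2,\dots)\in\mathbb{Z}[[q]]$.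 The reversal $\alpha^*=(\alpha_k,\dots,\alpha_1)$ induces the linear map $f\mapsto f^*$ on $\mathrm{QSym}$ with $M_\alpha^*=M_{\alpha^*}$, and $\mathrm{ps}^*(f)=\mathrm{ps}(f^* )$. For a graded poset $P$ of rank $m+1$ with minimum $\hat0$, maximum $\hat1$, rank function $\rho$, the $\mathbf{a}\mathbf{b}$-index is $\Psi(P)=\sum_{S\subseteq\{1,\dots,m\}} f_S\, v_S$, where for $S=\{s_1<\cdots<s_k\}$, $f_S$ counts chains $\hat0<x_1<\cdots<x_k<\hat1$ with $\rho(x_i)=s_i$ and $v_S=v_1\cdots v_m$ with $v_i=\mathbf{b}$ if $i\in S$, $v_i=\mathbf{a}-\mathbf{b}$ otherwise. The quasi-symmetric function of $P$ is $F(P)=\gamma(\Psi(P))$; equivalently $F(P)=\lim_{k\to\infty}\sum_{\hat0=x_0\le x_1\le\cdots\le x_k=\hat1}t_1^{\rho(x_1)-\rho(x_0)}\cdots t_k^{\rho(x_k)-\rho(x_{k-1})}$. *)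

theory Defs
  imports "HOL-Computational_Algebra.Computational_Algebra"
begin

text \<open>Non-commutative polynomials in a, b over the integers are represented by their
  coefficient functions on words: a word is a bool list, True = letter b, False = letter a.\<close>
type_synonym ncpoly = "bool list \<Rightarrow> int"

definition homogeneous :: "nat \<Rightarrow> ncpoly \<Rightarrow> bool" where
  "homogeneous d w \<longleftrightarrow> (\<forall>u. w u \<noteq> 0 \<longrightarrow> length u = d)"

definition maj_exp :: "bool list \<Rightarrow> nat" where
  "maj_exp u = (\<Sum>i<length u. if u ! i then i + 1 else 0)"

definition Theta :: "ncpoly \<Rightarrow> int poly" where
  "Theta w = (\<Sum>u\<in>{u. w u \<noteq> 0}. monom (w u) (maj_exp u))"

definition qint :: "nat \<Rightarrow> int poly" where
  "qint m = (\<Sum>i<m. monom 1 i)"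

definition qfact :: "nat \<Rightarrow> int poly" where
  "qfact n = (\<Prod>i\<in>{1..n}. qint i)"

definition is_comp :: "nat list \<Rightarrow> bool" where
  "is_comp \<alpha> \<longleftrightarrow> \<alpha> \<noteq> [] \<and> 0 \<notin> set \<alpha>"

text \<open>Pattern of v_alpha: True stands for the factor b, False for the factor (a - b).\<close>
fun vpat :: "nat list \<Rightarrow> bool list" where
  "vpat [] = []"
| "vpat [k] = replicate (k - 1) False"
| "vpat (k # l # ls) = replicate (k - 1) False @ [True] @ vpat (l # ls)"

text \<open>Coefficient of letter x in the factor p (b if p, a - b otherwise).\<close>
definition lcoef :: "bool \<Rightarrow> bool \<Rightarrow> int" where
  "lcoef p x = (if p then (if x then 1 else 0) else (if x then -1 else 1))"

text \<open>Coefficient of the monomial u in the product of factors given by pattern p.\<close>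
definition patcoef :: "bool list \<Rightarrow> ncpoly" where
  "patcoef p u = (if length u = length p then (\<Prod>i<length p. lcoef (p ! i) (u ! i)) else 0)"

definition v_comp :: "nat list \<Rightarrow> ncpoly" where
  "v_comp \<alpha> = patcoef (vpat \<alpha>)"

text \<open>Quasi-symmetric functions are represented by their coefficients in the monomial
  basis M_alpha (finitely supported functions on compositions).  gamma w is the unique
  coefficient family c with w = sum of c alpha * v_alpha.\<close>
type_synonym qsym = "nat list \<Rightarrow> int"

definition gamma :: "ncpoly \<Rightarrow> qsym" where
  "gamma w = (THE c. finite {\<alpha>. c \<alpha> \<noteq> 0} \<and> (\<forall>\<alpha>. c \<alpha> \<noteq> 0 \<longrightarrow> is_comp \<alpha>) \<and>
                 (\<forall>u. w u = (\<Sum>\<alpha>\<in>{\<alpha>. c \<alpha> \<noteq> 0}. c \<alpha> * v_comp \<alpha> u)))"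

text \<open>Stable principal specialization of M_alpha: t_i = q^(i-1); the coefficient of q^m
  counts the sequences 0 <= j_1 < ... < j_k with sum of alpha_l * j_l = m.\<close>
definition psM :: "nat list \<Rightarrow> int fps" where
  "psM \<alpha> = Abs_fps (\<lambda>m. int (card {j :: nat list. length j = length \<alpha> \<and> sorted_wrt (<) j \<and>
                 (\<Sum>i<length \<alpha>. \<alpha> ! i * j ! i) = m}))"

definition ps :: "qsym \<Rightarrow> int fps" where
  "ps f = (\<Sum>\<alpha>\<in>{\<alpha>. f \<alpha> \<noteq> 0}. fps_const (f \<alpha>) * psM \<alpha>)"

definition qsym_rev :: "qsym \<Rightarrow> qsym" where
  "qsym_rev f = (\<lambda>\<alpha>. f (rev \<alpha>))"

definition ps_star :: "qsym \<Rightarrow> int fps" where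
  "ps_star f = ps (qsym_rev f)"

definition covers :: "'a set \<Rightarrow> ('a \<Rightarrow> 'a \<Rightarrow> bool) \<Rightarrow> 'a \<Rightarrow> 'a \<Rightarrow> bool" where
  "covers P le x y \<longleftrightarrow> le x y \<and> x \<noteq> y \<and> \<not> (\<exists>c\<in>P. le x c \<and> le c y \<and> c \<noteq> x \<and> c \<noteq> y)"

definition graded_poset ::
  "'a set \<Rightarrow> ('a \<Rightarrow> 'a \<Rightarrow> bool) \<Rightarrow> 'a \<Rightarrow> 'a \<Rightarrow> ('a \<Rightarrow> nat) \<Rightarrow> nat \<Rightarrow> bool" where
  "graded_poset P le z t \<rho> n \<longleftrightarrow>
     finite P \<and> z \<in> P \<and> t \<in> P \<and>
     (\<forall>x\<in>P. le x x) \<and>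
     (\<forall>x\<in>P. \<forall>y\<in>P. le x y \<and> le y x \<longrightarrow> x = y) \<and>
     (\<forall>x\<in>P. \<forall>y\<in>P. \<forall>c\<in>P. le x y \<and> le y c \<longrightarrow> le x c) \<and>
     (\<forall>x\<in>P. le z x \<and> le x t) \<and>
     \<rho> z = 0 \<and> \<rho> t = n \<and>
     (\<forall>x\<in>P. \<forall>y\<in>P. covers P le x y \<longrightarrow> \<rho> y = \<rho> x + 1)"

definition flag_number :: "'a set \<Rightarrow> ('a \<Rightarrow> 'a \<Rightarrow> bool) \<Rightarrow> ('a \<Rightarrow> nat) \<Rightarrow> nat set \<Rightarrow> nat" where
  "flag_number P le \<rho> S = card {C. C \<subseteq> P \<and> (\<forall>x\<in>C. \<forall>y\<in>C. le x y \<or> le y x) \<and>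
                                   inj_on \<rho> C \<and> \<rho> ` C = S}"

definition v_set :: "nat \<Rightarrow> nat set \<Rightarrow> ncpoly" where
  "v_set m S = patcoef (map (\<lambda>i. i + 1 \<in> S) [0..<m])"

definition Psi :: "'a set \<Rightarrow> ('a \<Rightarrow> 'a \<Rightarrow> bool) \<Rightarrow> ('a \<Rightarrow> nat) \<Rightarrow> nat \<Rightarrow> ncpoly" where
  "Psi P le \<rho> n = (\<lambda>u. \<Sum>S\<in>Pow {1..n - 1}. int (flag_number P le \<rho> S) * v_set (n - 1) S u)"

definition Fqs :: "'a set \<Rightarrow> ('a \<Rightarrow> 'a \<Rightarrow> bool) \<Rightarrow> ('a \<Rightarrow> nat) \<Rightarrow> nat \<Rightarrow> qsym" where
  "Fqs P le \<rho> n = gamma (Psi P le \<rho> n)"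

end

theory Submission
  imports Defs
begin

text \<open>Since a = (a - b) + b, a monomial u is the sum of the v_p over the words p whose
  b-positions contain those of u; dually, summing the coefficients of a polynomial over the words
  below p extracts its v_p-coefficient. The same expansion writes q^maj(u) as the sum over these p
  of the product of q^i (i in p) and 1 - q^i (i not in p). Since (1 - q)^n [n]! is the product of
  the 1 - q^i for i = 1..n, the theorem reduces to the identity
  (1 - q) ... (1 - q^n) ps(M_(rev alpha)) = product of q^i (i in S) and 1 - q^i (i < n, i not in S),
  S the set of proper partial sums of alpha. It follows by induction on the length of alpha from
  (1 - q^|k gamma|) ps(M_(k gamma)) = q^|gamma| ps(M_gamma), which comes from sorting the exponent
  sequences j_1 < ... < j_l of ps(M_(k gamma)) by whether j_1 = 0: if not, subtracting 1 from every
  entry lowers the degree by |k gamma|; if so, dropping j_1 and subtracting 1 from the rest gives an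
  exponent sequence for gamma of degree lower by |gamma|.\<close>

section \<open>Compositions and their patterns\<close>

fun vpat_inv :: "bool list \<Rightarrow> nat list" where
  "vpat_inv [] = [1]"
| "vpat_inv (True # p) = 1 # vpat_inv p"
| "vpat_inv (False # p) = (case vpat_inv p of [] \<Rightarrow> [] | k # ks \<Rightarrow> Suc k # ks)"

lemma vpat_inv_neq_Nil: "vpat_inv p \<noteq> []"
  by (induction p rule: vpat_inv.induct) (auto split: list.split)

definition comps :: "nat \<Rightarrow> nat list set" where
  "comps n = {\<beta>. is_comp \<beta> \<and> sum_list \<beta> = n}"

lemma vpat_inv_in_comps: "vpat_inv p \<in> comps (Suc (length p))"
proof (induction p rule: vpat_inv.induct)
  case (3 p)
  then show ?case
    using vpat_inv_neq_Nil[of p] by (auto simp: comps_def is_comp_def split: list.split)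
qed (auto simp: comps_def is_comp_def)

lemma vpat_Cons: "vpat (k # \<beta>) = replicate (k - 1) False @ (if \<beta> = [] then [] else True # vpat \<beta>)"
  by (cases \<beta>) auto

lemma vpat_snoc: "\<beta> \<noteq> [] \<Longrightarrow> vpat (\<beta> @ [k]) = vpat \<beta> @ True # replicate (k - 1) False"
  by (induction \<beta> rule: vpat.induct) auto

lemma vpat_vpat_inv: "vpat (vpat_inv p) = p"
proof (induction p rule: vpat_inv.induct)
  case (3 p)
  obtain k ks where p: "vpat_inv p = k # ks"
    using vpat_inv_neq_Nil[of p] by (cases "vpat_inv p") auto
  with vpat_inv_in_comps[of p] have "k \<noteq> 0"
    by (auto simp: comps_def is_comp_def)
  then show ?case using 3 p by (cases k) (auto simp: vpat_Cons)
qed (auto simp: vpat_Cons)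

lemma vpat_inv_replicate_False_append:
  "vpat_inv (replicate j False @ p) = (hd (vpat_inv p) + j) # tl (vpat_inv p)"
  using vpat_inv_neq_Nil[of p] by (induction j) (auto simp: neq_Nil_conv)

lemma vpat_inv_vpat: "is_comp \<beta> \<Longrightarrow> vpat_inv (vpat \<beta>) = \<beta>"
proof (induction \<beta> rule: vpat.induct)
  case (3 k l ls)
  then have "is_comp (l # ls)" by (auto simp: is_comp_def)
  with 3 show ?case by (auto simp: is_comp_def vpat_inv_replicate_False_append)
qed (use vpat_inv_replicate_False_append[of _ "[]"] in \<open>auto simp: is_comp_def\<close>)

lemma length_vpat: "is_comp \<beta> \<Longrightarrow> length (vpat \<beta>) = sum_list \<beta> - 1"
proof (induction \<beta> rule: vpat.induct)
  case (3 k l ls)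
  then have "is_comp (l # ls)" by (auto simp: is_comp_def)
  with 3 show ?case by (auto simp: is_comp_def)
qed (auto simp: is_comp_def)

definition words :: "nat \<Rightarrow> bool list set" where
  "words m = {u. length u = m}"

lemma finite_words: "finite (words m)"
  using finite_lists_length_eq[of "UNIV :: bool set" m] by (simp add: words_def)

lemma bij_betw_vpat_comps: "bij_betw vpat (comps (Suc m)) (words m)"
  by (rule bij_betw_byWitness[where f' = vpat_inv])
    (use vpat_inv_vpat vpat_vpat_inv vpat_inv_in_comps length_vpat in
      \<open>auto simp: comps_def words_def\<close>)

lemma finite_comps: "finite (comps (Suc m))"
  using bij_betw_finite[OF bij_betw_vpat_comps] finite_words by blast

section \<open>Monomials versus the basis \<open>v\<^sub>\<alpha>\<close>\<close>

lemma words_Suc: "words (Suc m) = (\<lambda>(x, u). x # u) ` (UNIV \<times> words m)"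
  by (auto simp: words_def image_iff length_Suc_conv)

lemma sum_words_prod:
  fixes f :: "nat \<Rightarrow> bool \<Rightarrow> 'a::comm_semiring_1"
  shows "(\<Sum>u\<in>words m. \<Prod>i<m. f i (u ! i)) = (\<Prod>i<m. f i True + f i False)"
proof (induction m arbitrary: f)
  case 0
  then show ?case by (simp add: words_def)
next
  case (Suc m)
  have inj: "inj_on (\<lambda>(x, u). x # u) (UNIV \<times> words m)"
    by (auto simp: inj_on_def)
  have "(\<Sum>u\<in>words (Suc m). \<Prod>i<Suc m. f i (u ! i))
      = (\<Sum>(x, u)\<in>UNIV \<times> words m. f 0 x * (\<Prod>i<m. f (Suc i) (u ! i)))"
    unfolding words_Suc
    by (subst sum.reindex[OF inj]) (simp add: case_prod_beta prod.lessThan_Suc_shift del: prod.lessThan_Suc)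
  also have "\<dots> = (\<Sum>x\<in>UNIV. \<Sum>u\<in>words m. f 0 x * (\<Prod>i<m. f (Suc i) (u ! i)))"
    by (simp add: sum.cartesian_product)
  also have "\<dots> = (\<Sum>x\<in>UNIV. f 0 x * (\<Prod>i<m. f (Suc i) True + f (Suc i) False))"
    by (simp add: sum_distrib_left[symmetric] Suc.IH[of "\<lambda>i. f (Suc i)"])
  also have "\<dots> = (\<Prod>i<Suc m. f i True + f i False)"
    by (simp add: UNIV_bool prod.lessThan_Suc_shift algebra_simps del: prod.lessThan_Suc)
  finally show ?case .
qed

lemma of_bool_all_less:
  "(of_bool (\<forall>i<(m::nat). P i) :: 'a::comm_semiring_1) = (\<Prod>i<m. of_bool (P i))"
proof (induction m)
  case (Suc m)
  have "(\<forall>i<Suc m. P i) \<longleftrightarrow> (\<forall>i<m. P i) \<and> P m"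
    by (auto simp: less_Suc_eq)
  then show ?case
    using Suc by (simp add: of_bool_conj)
qed simp

definition word_le :: "bool list \<Rightarrow> bool list \<Rightarrow> bool" where
  "word_le u p \<longleftrightarrow> (\<forall>i<length u. u ! i \<longrightarrow> p ! i)"

lemma of_bool_word_le:
  "length u = m \<Longrightarrow>
    (of_bool (word_le u p) :: 'a::comm_semiring_1) = (\<Prod>i<m. of_bool (u ! i \<longrightarrow> p ! i))"
  by (simp add: word_le_def of_bool_all_less)

lemma of_bool_eq_words:
  "u \<in> words m \<Longrightarrow> x \<in> words m \<Longrightarrow>
    (of_bool (x = u) :: 'a::comm_semiring_1) = (\<Prod>i<m. of_bool (x ! i = u ! i))"
  by (simp add: words_def list_eq_iff_nth_eq of_bool_all_less[symmetric])

lemma sum_patcoef_above: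
  assumes "u \<in> words m" "x \<in> words m"
  shows "(\<Sum>p\<in>words m. of_bool (word_le u p) * patcoef p x) = (of_bool (x = u) :: int)"
proof -
  have "(\<Sum>p\<in>words m. of_bool (word_le u p) * patcoef p x)
      = (\<Sum>p\<in>words m. \<Prod>i<m. of_bool (u ! i \<longrightarrow> p ! i) * lcoef (p ! i) (x ! i))"
    using assms by (intro sum.cong) (auto simp: words_def of_bool_word_le patcoef_def prod.distrib)
  also have "\<dots> = (\<Prod>i<m. of_bool (x ! i = u ! i))"
    by (subst sum_words_prod) (auto intro!: prod.cong simp: lcoef_def)
  also have "\<dots> = of_bool (x = u)"
    using assms by (simp add: of_bool_eq_words)
  finally show ?thesis .
qed

lemma sum_patcoef_below:
  assumes "p \<in> words m"
  shows "(\<Sum>x\<in>words m. of_bool (word_le x p) * patcoef q x) = (of_bool (q = p) :: int)"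
proof (cases "q \<in> words m")
  case False
  then show ?thesis
    using assms by (auto intro!: sum.neutral simp: words_def patcoef_def)
next
  case True
  have "(\<Sum>x\<in>words m. of_bool (word_le x p) * patcoef q x)
      = (\<Sum>x\<in>words m. \<Prod>i<m. of_bool (x ! i \<longrightarrow> p ! i) * lcoef (q ! i) (x ! i))"
    using True by (intro sum.cong) (auto simp: words_def of_bool_word_le patcoef_def prod.distrib)
  also have "\<dots> = (\<Prod>i<m. of_bool (q ! i = p ! i))"
    by (subst sum_words_prod) (auto intro!: prod.cong simp: lcoef_def)
  also have "\<dots> = of_bool (q = p)"
    using assms True by (simp add: of_bool_eq_words)
  finally show ?thesis .
qed

definition expands_in_v :: "ncpoly \<Rightarrow> qsym \<Rightarrow> bool" where
  "expands_in_v w c \<longleftrightarrow> finite {\<alpha>. c \<alpha> \<noteq> 0} \<and> (\<forall>\<alpha>. c \<alpha> \<noteq> 0 \<longrightarrow> is_comp \<alpha>) \<and>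
     (\<forall>u. w u = (\<Sum>\<alpha>\<in>{\<alpha>. c \<alpha> \<noteq> 0}. c \<alpha> * v_comp \<alpha> u))"

definition qsym_coeff :: "ncpoly \<Rightarrow> qsym" where
  "qsym_coeff w \<beta> = (if is_comp \<beta>
     then (\<Sum>u\<in>words (length (vpat \<beta>)). of_bool (word_le u (vpat \<beta>)) * w u) else 0)"

lemma expands_in_v_coeff:
  assumes c: "expands_in_v w c"
  shows "c = qsym_coeff w"
proof
  fix \<beta>
  show "c \<beta> = qsym_coeff w \<beta>"
  proof (cases "is_comp \<beta>")
    case False
    then show ?thesis
      using c by (auto simp: expands_in_v_def qsym_coeff_def)
  next
    case True
    define F where "F = {\<alpha>. c \<alpha> \<noteq> 0}"
    define L where "L = words (length (vpat \<beta>))"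
    have F: "finite F" "\<And>\<alpha>. \<alpha> \<in> F \<Longrightarrow> is_comp \<alpha>"
      using c by (auto simp: expands_in_v_def F_def)
    have w: "w x = (\<Sum>\<alpha>\<in>F. c \<alpha> * patcoef (vpat \<alpha>) x)" for x
      using c by (simp add: expands_in_v_def F_def v_comp_def)
    have "(\<Sum>x\<in>L. of_bool (word_le x (vpat \<beta>)) * w x)
        = (\<Sum>\<alpha>\<in>F. c \<alpha> * (\<Sum>x\<in>L. of_bool (word_le x (vpat \<beta>)) * patcoef (vpat \<alpha>) x))"
      unfolding w sum_distrib_left sum_distrib_right by (subst sum.swap) (simp add: mult_ac)
    also have "\<dots> = (\<Sum>\<alpha>\<in>F. c \<alpha> * of_bool (\<alpha> = \<beta>))"
    proof (rule sum.cong[OF refl])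
      fix \<alpha>
      assume "\<alpha> \<in> F"
      then have "vpat \<alpha> = vpat \<beta> \<longleftrightarrow> \<alpha> = \<beta>"
        using vpat_inv_vpat[OF F(2)] vpat_inv_vpat[OF True] by metis
      then show "c \<alpha> * (\<Sum>x\<in>L. of_bool (word_le x (vpat \<beta>)) * patcoef (vpat \<alpha>) x)
          = c \<alpha> * of_bool (\<alpha> = \<beta>)"
        using sum_patcoef_below[of "vpat \<beta>" "length (vpat \<beta>)" "vpat \<alpha>"]
        by (simp add: L_def words_def)
    qed
    also have "\<dots> = c \<beta>"
      using F(1) by (simp add: F_def of_bool_def if_distrib sum.delta' cong: if_cong)
    finally show ?thesis
      using True by (simp add: qsym_coeff_def L_def)
  qed
qed

lemma qsym_coeff_support:
  assumes w: "homogeneous m w"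
  shows "{\<beta>. qsym_coeff w \<beta> \<noteq> 0} \<subseteq> comps (Suc m)"
proof
  fix \<beta>
  assume "\<beta> \<in> {\<beta>. qsym_coeff w \<beta> \<noteq> 0}"
  then have \<beta>: "is_comp \<beta>"
    and "(\<Sum>u\<in>words (length (vpat \<beta>)). of_bool (word_le u (vpat \<beta>)) * w u) \<noteq> 0"
    by (auto simp: qsym_coeff_def split: if_splits)
  then obtain u where "u \<in> words (length (vpat \<beta>))" "w u \<noteq> 0"
    by (metis (no_types, lifting) mult_zero_right sum.neutral)
  then have "length (vpat \<beta>) = m"
    using w by (simp add: homogeneous_def words_def)
  moreover have "sum_list \<beta> \<noteq> 0"
    using \<beta> by (cases \<beta>) (auto simp: is_comp_def)
  ultimately have "sum_list \<beta> = Suc m"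
    using length_vpat[OF \<beta>] by linarith
  then show "\<beta> \<in> comps (Suc m)"
    using \<beta> by (simp add: comps_def)
qed

lemma sum_qsym_coeff:
  fixes F :: "bool list \<Rightarrow> 'a::comm_ring_1"
  assumes w: "homogeneous m w"
  shows "(\<Sum>\<beta>\<in>{\<beta>. qsym_coeff w \<beta> \<noteq> 0}. of_int (qsym_coeff w \<beta>) * F (vpat \<beta>))
       = (\<Sum>u\<in>words m. of_int (w u) * (\<Sum>p\<in>words m. of_bool (word_le u p) * F p))"
proof -
  have coeff: "qsym_coeff w \<beta> = (\<Sum>u\<in>words m. of_bool (word_le u (vpat \<beta>)) * w u)"
    if "\<beta> \<in> comps (Suc m)" for \<beta>
    using that length_vpat by (simp add: comps_def qsym_coeff_def)
  have "(\<Sum>\<beta>\<in>{\<beta>. qsym_coeff w \<beta> \<noteq> 0}. of_int (qsym_coeff w \<beta>) * F (vpat \<beta>))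
      = (\<Sum>\<beta>\<in>comps (Suc m). of_int (qsym_coeff w \<beta>) * F (vpat \<beta>))"
    by (rule sum.mono_neutral_left[OF finite_comps qsym_coeff_support[OF w]]) auto
  also have "\<dots> = (\<Sum>\<beta>\<in>comps (Suc m).
      of_int (\<Sum>u\<in>words m. of_bool (word_le u (vpat \<beta>)) * w u) * F (vpat \<beta>))"
    by (simp add: coeff)
  also have "\<dots> = (\<Sum>p\<in>words m. of_int (\<Sum>u\<in>words m. of_bool (word_le u p) * w u) * F p)"
    by (rule sum.reindex_bij_betw[OF bij_betw_vpat_comps])
  also have "\<dots> = (\<Sum>p\<in>words m. \<Sum>u\<in>words m. of_int (w u) * (of_bool (word_le u p) * F p))"
    by (simp add: sum_distrib_left sum_distrib_right mult_ac)
  also have "\<dots> = (\<Sum>u\<in>words m. of_int (w u) * (\<Sum>p\<in>words m. of_bool (word_le u p) * F p))"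
    by (subst sum.swap) (simp add: sum_distrib_left)
  finally show ?thesis .
qed

lemma expands_in_v_qsym_coeff:
  assumes w: "homogeneous m w"
  shows "expands_in_v w (qsym_coeff w)"
proof -
  have "w x = (\<Sum>\<beta>\<in>{\<beta>. qsym_coeff w \<beta> \<noteq> 0}. qsym_coeff w \<beta> * v_comp \<beta> x)" for x
  proof (cases "x \<in> words m")
    case True
    have "(\<Sum>\<beta>\<in>{\<beta>. qsym_coeff w \<beta> \<noteq> 0}. qsym_coeff w \<beta> * v_comp \<beta> x)
        = (\<Sum>u\<in>words m. w u * of_bool (x = u))"
      using sum_qsym_coeff[OF w, of "\<lambda>p. patcoef p x"] True
      by (simp add: v_comp_def sum_patcoef_above)
    also have "\<dots> = w x"
      using True finite_words by (simp add: of_bool_def if_distrib sum.delta' cong: if_cong)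
    finally show ?thesis ..
  next
    case False
    then have "w x = 0" and "\<forall>p\<in>words m. patcoef p x = 0"
      using w by (auto simp: homogeneous_def words_def patcoef_def)
    then show ?thesis
      using sum_qsym_coeff[OF w, of "\<lambda>p. patcoef p x"] by (simp add: v_comp_def)
  qed
  moreover have "finite {\<beta>. qsym_coeff w \<beta> \<noteq> 0}"
    using finite_subset[OF qsym_coeff_support[OF w] finite_comps] .
  moreover have "is_comp \<beta>" if "qsym_coeff w \<beta> \<noteq> 0" for \<beta>
    using that by (simp add: qsym_coeff_def split: if_splits)
  ultimately show ?thesis
    unfolding expands_in_v_def by blast
qed

lemma gamma_eq_qsym_coeff:
  assumes "homogeneous m w"
  shows "gamma w = qsym_coeff w"
  unfolding gamma_def expands_in_v_def[symmetric]
proof (rule the_equality)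
  show "expands_in_v w (qsym_coeff w)"
    using expands_in_v_qsym_coeff[OF assms] .
qed (rule expands_in_v_coeff)

section \<open>Principal specialization of \<open>M\<^sub>\<alpha>\<close>\<close>

definition weighted_sum :: "nat list \<Rightarrow> nat list \<Rightarrow> nat" where
  "weighted_sum \<alpha> j = (\<Sum>i<length \<alpha>. \<alpha> ! i * j ! i)"

definition psM_seqs :: "nat list \<Rightarrow> nat \<Rightarrow> nat list set" where
  "psM_seqs \<alpha> m = {j. length j = length \<alpha> \<and> sorted_wrt (<) j \<and> weighted_sum \<alpha> j = m}"

lemma psM_nth: "psM \<alpha> $ m = int (card (psM_seqs \<alpha> m))"
  by (simp add: psM_def psM_seqs_def weighted_sum_def)

lemma weighted_sum_Cons: "weighted_sum (k # \<gamma>) (x # t) = k * x + weighted_sum \<gamma> t"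
  by (simp add: weighted_sum_def sum.lessThan_Suc_shift del: sum.lessThan_Suc)

lemma weighted_sum_map_Suc:
  "length j = length \<alpha> \<Longrightarrow> weighted_sum \<alpha> (map Suc j) = weighted_sum \<alpha> j + sum_list \<alpha>"
  by (simp add: weighted_sum_def sum_list_sum_nth atLeast0LessThan sum.distrib algebra_simps)

lemma finite_psM_seqs:
  assumes "0 \<notin> set \<alpha>"
  shows "finite (psM_seqs \<alpha> m)"
proof (rule finite_subset)
  show "psM_seqs \<alpha> m \<subseteq> {j. set j \<subseteq> {0..m} \<and> length j = length \<alpha>}"
  proof safe
    fix j y
    assume j: "j \<in> psM_seqs \<alpha> m" and "y \<in> set j"
    then obtain i where i: "i < length \<alpha>" "y = j ! i"
      by (auto simp: psM_seqs_def in_set_conv_nth)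
    then have "1 \<le> \<alpha> ! i"
      using assms by (metis less_one not_le nth_mem)
    then have "y \<le> \<alpha> ! i * j ! i"
      using i by simp
    also have "\<dots> \<le> weighted_sum \<alpha> j"
      unfolding weighted_sum_def by (rule member_le_sum) (use i in auto)
    finally show "y \<in> {0..m}"
      using j by (simp add: psM_seqs_def)
  qed (simp add: psM_seqs_def)
qed (rule finite_lists_length_eq[OF finite_atLeastAtMost])

lemma psM_seqs_zero_free:
  "{j \<in> psM_seqs \<alpha> m. 0 \<notin> set j} =
     (if sum_list \<alpha> \<le> m then map Suc ` psM_seqs \<alpha> (m - sum_list \<alpha>) else {})"
proof -
  have "j \<in> psM_seqs \<alpha> m \<and> 0 \<notin> set j \<longleftrightarrow>
      sum_list \<alpha> \<le> m \<and> j \<in> map Suc ` psM_seqs \<alpha> (m - sum_list \<alpha>)" for j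
  proof
    assume j: "j \<in> psM_seqs \<alpha> m \<and> 0 \<notin> set j"
    then obtain j' where j': "j = map Suc j'"
      by (metis ex_map_conv not0_implies_Suc)
    have "length j' = length \<alpha>"
      using j j' by (simp add: psM_seqs_def)
    then show "sum_list \<alpha> \<le> m \<and> j \<in> map Suc ` psM_seqs \<alpha> (m - sum_list \<alpha>)"
      using j j' weighted_sum_map_Suc[of j' \<alpha>] by (auto simp: psM_seqs_def sorted_wrt_map)
  next
    assume "sum_list \<alpha> \<le> m \<and> j \<in> map Suc ` psM_seqs \<alpha> (m - sum_list \<alpha>)"
    then show "j \<in> psM_seqs \<alpha> m \<and> 0 \<notin> set j"
      using weighted_sum_map_Suc by (auto simp: psM_seqs_def sorted_wrt_map)
  qed
  then show ?thesis
    by auto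
qed

lemma psM_seqs_Cons_with_zero:
  "{j \<in> psM_seqs (k # \<gamma>) m. 0 \<in> set j} =
     (if sum_list \<gamma> \<le> m then (\<lambda>t. 0 # map Suc t) ` psM_seqs \<gamma> (m - sum_list \<gamma>) else {})"
proof -
  have "j \<in> psM_seqs (k # \<gamma>) m \<and> 0 \<in> set j \<longleftrightarrow>
      sum_list \<gamma> \<le> m \<and> j \<in> (\<lambda>t. 0 # map Suc t) ` psM_seqs \<gamma> (m - sum_list \<gamma>)" for j
  proof
    assume j: "j \<in> psM_seqs (k # \<gamma>) m \<and> 0 \<in> set j"
    then obtain x t where "j = x # t" "sorted_wrt (<) (x # t)"
      by (cases j) (auto simp: psM_seqs_def)
    then have "x = 0" and "0 \<notin> set t"
      using j by auto
    then obtain t' where j': "j = 0 # map Suc t'"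
      using \<open>j = x # t\<close> by (metis ex_map_conv not0_implies_Suc)
    have "length t' = length \<gamma>"
      using j j' by (simp add: psM_seqs_def)
    then show "sum_list \<gamma> \<le> m \<and> j \<in> (\<lambda>t. 0 # map Suc t) ` psM_seqs \<gamma> (m - sum_list \<gamma>)"
      using j j' weighted_sum_map_Suc[of t' \<gamma>]
      by (auto simp: psM_seqs_def sorted_wrt_map weighted_sum_Cons)
  next
    assume "sum_list \<gamma> \<le> m \<and> j \<in> (\<lambda>t. 0 # map Suc t) ` psM_seqs \<gamma> (m - sum_list \<gamma>)"
    then show "j \<in> psM_seqs (k # \<gamma>) m \<and> 0 \<in> set j"
      using weighted_sum_map_Suc by (auto simp: psM_seqs_def sorted_wrt_map weighted_sum_Cons)
  qed
  then show ?thesis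
    by auto
qed

lemma card_psM_seqs_Cons:
  assumes "0 \<notin> set (k # \<gamma>)"
  shows "card (psM_seqs (k # \<gamma>) m) =
    (if sum_list (k # \<gamma>) \<le> m then card (psM_seqs (k # \<gamma>) (m - sum_list (k # \<gamma>))) else 0) +
    (if sum_list \<gamma> \<le> m then card (psM_seqs \<gamma> (m - sum_list \<gamma>)) else 0)"
proof -
  have inj: "inj (map Suc)" "inj (\<lambda>t. 0 # map Suc t)"
    by (auto simp: inj_on_def)
  have "psM_seqs (k # \<gamma>) m =
      {j \<in> psM_seqs (k # \<gamma>) m. 0 \<notin> set j} \<union> {j \<in> psM_seqs (k # \<gamma>) m. 0 \<in> set j}"
    by blast
  then have "card (psM_seqs (k # \<gamma>) m) =
      card {j \<in> psM_seqs (k # \<gamma>) m. 0 \<notin> set j} + card {j \<in> psM_seqs (k # \<gamma>) m. 0 \<in> set j}"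
    using finite_psM_seqs[OF assms] by (metis (no_types, lifting) card_Un_disjoint
        disjoint_iff finite_Un mem_Collect_eq)
  then show ?thesis
    unfolding psM_seqs_zero_free psM_seqs_Cons_with_zero
    by (simp add: card_image inj_on_subset[OF inj(1)] inj_on_subset[OF inj(2)])
qed

lemma psM_Nil: "psM [] = 1"
proof (rule fps_ext)
  fix m
  have "psM_seqs [] m = (if m = 0 then {[]} else {})"
    by (auto simp: psM_seqs_def weighted_sum_def)
  then show "psM [] $ m = 1 $ m"
    by (simp add: psM_nth)
qed

lemma psM_Cons:
  assumes "0 \<notin> set (k # \<gamma>)"
  shows "(1 - fps_X ^ sum_list (k # \<gamma>)) * psM (k # \<gamma>) = fps_X ^ sum_list \<gamma> * psM \<gamma>"
proof (rule fps_ext)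
  fix m
  show "((1 - fps_X ^ sum_list (k # \<gamma>)) * psM (k # \<gamma>)) $ m = (fps_X ^ sum_list \<gamma> * psM \<gamma>) $ m"
    using card_psM_seqs_Cons[OF assms, of m]
    by (simp add: ring_distribs fps_X_power_mult_nth psM_nth not_less)
qed

definition qpochhammer :: "nat \<Rightarrow> int fps" where
  "qpochhammer n = (\<Prod>i<n. 1 - fps_X ^ Suc i)"

definition pat_weight :: "bool list \<Rightarrow> int fps" where
  "pat_weight p = (\<Prod>i<length p. if p ! i then fps_X ^ Suc i else 1 - fps_X ^ Suc i)"

lemma prod_lessThan_add:
  fixes f :: "nat \<Rightarrow> 'a::comm_monoid_mult"
  shows "(\<Prod>i<m + n. f i) = (\<Prod>i<m. f i) * (\<Prod>i<n. f (m + i))"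
  by (induction n) (simp_all add: ac_simps)

lemma qpochhammer_add:
  "qpochhammer (m + n) = qpochhammer m * (\<Prod>i<n. 1 - fps_X ^ (m + Suc i))"
  by (simp add: qpochhammer_def prod_lessThan_add)

lemma pat_weight_replicate_False: "pat_weight (replicate n False) = qpochhammer n"
  by (simp add: pat_weight_def qpochhammer_def)

lemma pat_weight_append:
  "pat_weight (p @ q) =
     pat_weight p * (\<Prod>i<length q. if q ! i then fps_X ^ Suc (length p + i) else 1 - fps_X ^ Suc (length p + i))"
  by (simp add: pat_weight_def prod_lessThan_add nth_append)

lemma pat_weight_append_True_replicate_False:
  "pat_weight (p @ True # replicate j False) =
     pat_weight p * fps_X ^ Suc (length p) * (\<Prod>i<j. 1 - fps_X ^ Suc (length p + Suc i))"
  by (simp add: pat_weight_append prod.lessThan_Suc_shift mult.assoc del: prod.lessThan_Suc)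

lemma qpochhammer_psM_rev:
  "is_comp \<beta> \<Longrightarrow> qpochhammer (sum_list \<beta>) * psM (rev \<beta>) = pat_weight (vpat \<beta>)"
proof (induction \<beta> rule: rev_induct)
  case Nil
  then show ?case by (simp add: is_comp_def)
next
  case (snoc k \<beta>)
  then obtain j where k: "k = Suc j"
    by (cases k) (auto simp: is_comp_def)
  show ?case
  proof (cases "\<beta> = []")
    case True
    have "(1 - fps_X ^ Suc j) * psM [Suc j] = 1"
      using psM_Cons[of "Suc j" "[]"] by (simp add: psM_Nil)
    moreover have "qpochhammer (Suc j) = qpochhammer j * (1 - fps_X ^ Suc j)"
      by (simp add: qpochhammer_def)
    ultimately show ?thesis
      using True k by (simp add: pat_weight_replicate_False mult.assoc)
  next
    case False
    with snoc.prems have \<beta>: "is_comp \<beta>"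
      by (auto simp: is_comp_def)
    define b where "b = sum_list \<beta>"
    have b: "b = Suc (length (vpat \<beta>))"
      using \<beta> length_vpat[OF \<beta>] False by (cases \<beta>) (auto simp: b_def is_comp_def)
    define R where "R = (\<Prod>i<j. 1 - fps_X ^ (b + Suc i) :: int fps)"
    have "qpochhammer (b + Suc j) = qpochhammer b * R * (1 - fps_X ^ (b + Suc j))"
      unfolding qpochhammer_add R_def by (simp add: mult.assoc)
    then have "qpochhammer (sum_list (\<beta> @ [k])) =
        qpochhammer b * R * (1 - fps_X ^ sum_list (Suc j # rev \<beta>))"
      by (simp add: k b_def add.commute)
    moreover have "(1 - fps_X ^ sum_list (Suc j # rev \<beta>)) * psM (Suc j # rev \<beta>) =
        fps_X ^ b * psM (rev \<beta>)"
      using psM_Cons[of "Suc j" "rev \<beta>"] snoc.prems by (simp add: k b_def is_comp_def)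
    ultimately have "qpochhammer (sum_list (\<beta> @ [k])) * psM (rev (\<beta> @ [k]))
        = R * fps_X ^ b * (qpochhammer b * psM (rev \<beta>))"
      by (simp add: k ac_simps)
    also have "\<dots> = pat_weight (vpat (\<beta> @ [k]))"
      using snoc.IH[OF \<beta>] False
      by (simp add: b_def[symmetric] b k R_def vpat_snoc pat_weight_append_True_replicate_False ac_simps)
    finally show ?thesis .
  qed
qed

lemma sum_pat_weight_word_le:
  assumes "u \<in> words m"
  shows "(\<Sum>p\<in>words m. of_bool (word_le u p) * pat_weight p) = fps_X ^ maj_exp u"
proof -
  have "(\<Sum>p\<in>words m. of_bool (word_le u p) * pat_weight p)
      = (\<Sum>p\<in>words m. \<Prod>i<m. of_bool (u ! i \<longrightarrow> p ! i) *
           (if p ! i then fps_X ^ Suc i else 1 - fps_X ^ Suc i))"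
    using assms by (intro sum.cong) (auto simp: words_def of_bool_word_le pat_weight_def prod.distrib)
  also have "\<dots> = (\<Prod>i<m. fps_X ^ (if u ! i then Suc i else 0))"
    by (subst sum_words_prod) (auto intro!: prod.cong)
  also have "\<dots> = fps_X ^ maj_exp u"
    using assms by (auto simp: maj_exp_def power_sum words_def intro!: prod.cong)
  finally show ?thesis .
qed

lemma fps_of_poly_Theta:
  assumes "homogeneous m w"
  shows "fps_of_poly (Theta w) = (\<Sum>u\<in>words m. of_int (w u) * fps_X ^ maj_exp u)"
proof -
  have "fps_of_poly (Theta w) = (\<Sum>u\<in>{u. w u \<noteq> 0}. of_int (w u) * fps_X ^ maj_exp u)"
    by (simp add: Theta_def fps_of_poly_sum fps_of_poly_monom fps_of_int[symmetric])
  also have "\<dots> = (\<Sum>u\<in>words m. of_int (w u) * fps_X ^ maj_exp u)"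
    using assms by (intro sum.mono_neutral_left[OF finite_words]) (auto simp: homogeneous_def words_def)
  finally show ?thesis .
qed

lemma one_minus_X_power_qfact: "(1 - fps_X) ^ n * fps_of_poly (qfact n) = qpochhammer n"
proof -
  have "fps_of_poly (qint i) = (\<Sum>j<i. fps_X ^ j)" for i
    by (simp add: qint_def fps_of_poly_sum fps_of_poly_monom')
  then have "(1 - fps_X) ^ n * fps_of_poly (qfact n) =
      (\<Prod>i<n. (1 - fps_X) * (\<Sum>j<Suc i. fps_X ^ j :: int fps))"
    by (simp add: qfact_def fps_of_poly_prod prod.atLeast1_atMost_eq prod.distrib)
  also have "\<dots> = qpochhammer n"
    by (simp only: one_diff_power_eq qpochhammer_def)
  finally show ?thesis .
qed

lemma ps_star_eq: "ps_star c = (\<Sum>\<beta>\<in>{\<beta>. c \<beta> \<noteq> 0}. of_int (c \<beta>) * psM (rev \<beta>))"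
proof -
  have "ps_star c = (\<Sum>\<alpha>\<in>{\<alpha>. c (rev \<alpha>) \<noteq> 0}. of_int (c (rev \<alpha>)) * psM \<alpha>)"
    by (simp add: ps_star_def ps_def qsym_rev_def fps_of_int[symmetric])
  also have "\<dots> = (\<Sum>\<beta>\<in>{\<beta>. c \<beta> \<noteq> 0}. of_int (c \<beta>) * psM (rev \<beta>))"
    by (rule sum.reindex_bij_witness[of _ rev rev]) auto
  finally show ?thesis .
qed

lemma Theta_eq_ps_star_gamma:
  assumes w: "homogeneous m w"
  shows "fps_of_poly (Theta w) = (1 - fps_X) ^ Suc m * fps_of_poly (qfact (Suc m)) * ps_star (gamma w)"
proof -
  have "(1 - fps_X) ^ Suc m * fps_of_poly (qfact (Suc m)) * ps_star (gamma w)
      = qpochhammer (Suc m) * ps_star (qsym_coeff w)"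
    by (simp only: one_minus_X_power_qfact gamma_eq_qsym_coeff[OF w])
  also have "\<dots> = (\<Sum>\<beta>\<in>{\<beta>. qsym_coeff w \<beta> \<noteq> 0}.
      of_int (qsym_coeff w \<beta>) * (qpochhammer (Suc m) * psM (rev \<beta>)))"
    by (simp add: ps_star_eq sum_distrib_left mult_ac)
  also have "\<dots> = (\<Sum>\<beta>\<in>{\<beta>. qsym_coeff w \<beta> \<noteq> 0}. of_int (qsym_coeff w \<beta>) * pat_weight (vpat \<beta>))"
  proof (rule sum.cong[OF refl])
    fix \<beta>
    assume "\<beta> \<in> {\<beta>. qsym_coeff w \<beta> \<noteq> 0}"
    then have "is_comp \<beta>" "sum_list \<beta> = Suc m"
      using qsym_coeff_support[OF w] by (auto simp: comps_def)
    then show "of_int (qsym_coeff w \<beta>) * (qpochhammer (Suc m) * psM (rev \<beta>))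
        = of_int (qsym_coeff w \<beta>) * pat_weight (vpat \<beta>)"
      using qpochhammer_psM_rev by metis
  qed
  also have "\<dots> = (\<Sum>u\<in>words m. of_int (w u) * fps_X ^ maj_exp u)"
    by (simp add: sum_qsym_coeff[OF w] sum_pat_weight_word_le)
  finally show ?thesis
    by (simp add: fps_of_poly_Theta[OF w])
qed

lemma homogeneous_Psi: "homogeneous (n - 1) (Psi P le \<rho> n)"
  unfolding homogeneous_def Psi_def
proof (intro allI impI)
  fix u
  assume "(\<Sum>S\<in>Pow {1..n - 1}. int (flag_number P le \<rho> S) * v_set (n - 1) S u) \<noteq> 0"
  then obtain S where "v_set (n - 1) S u \<noteq> 0"
    by (metis (no_types, lifting) mult_zero_right sum.neutral)
  then show "length u = n - 1"
    by (simp add: v_set_def patcoef_def split: if_splits)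
qed

theorem mainTheorem6:
  fixes n :: nat
  assumes "n \<ge> 1"
  shows "(\<forall>w :: ncpoly. homogeneous (n - 1) w \<longrightarrow>
            fps_of_poly (Theta w) =
              (1 - fps_X) ^ n * fps_of_poly (qfact n) * ps_star (gamma w))
       \<and> (\<forall>(P :: 'a set) le z t \<rho>. graded_poset P le z t \<rho> n \<longrightarrow>
            fps_of_poly (Theta (Psi P le \<rho> n)) =
              (1 - fps_X) ^ n * fps_of_poly (qfact n) * ps_star (Fqs P le \<rho> n))"
proof -
  have n: "Suc (n - 1) = n"
    using assms by simp
  have "fps_of_poly (Theta w) = (1 - fps_X) ^ n * fps_of_poly (qfact n) * ps_star (gamma w)"
    if "homogeneous (n - 1) w" for w
    using Theta_eq_ps_star_gamma[OF that] by (simp only: n)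
  then show ?thesis
    unfolding Fqs_def using homogeneous_Psi by blast
qed

end
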